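(* Let $Y\subseteq\hat I_\tau$ be nonempty and suppose $p\nmid a_Y$. Then there is a rational interior point $\vartheta$ of $F_Y$ such that $p\nmid m$, where $m$ is the minimal positive multiple of $r$ with $\frac mr\vartheta\in X_*(T_{\mathrm{ad}})^\tau$.
   Context: $p$ is a prime (the characteristic of an algebraically closed field $\mathrm k$). $G$ is a connected simple algebraic group with maximal torus $T$, $T_{\mathrm{ad}}$ the image of $T$ in the adjoint group; $\tau$ a diagram automorphism of order $r$. $\hat I_\tau=I_\tau\sqcup\{o\}$ is the vertex set of the affine Dynkin diagram of the twisted loop group $G(\mathrm k((z)))^\tau$, $I_\tau$ the $\tau$-orbits of vertices of the diagram of $G$; $(a_i)_{i\in\hat I_\tau}$ the Kac labels ($a_o=1$); $X_*(T_{\mathrm{ad}})^\tau=\bigoplus_{i\in I_\tau}\mathbb Z\check\omega_i$, $\check\omega_o:=0$. The fundamental alcove in $X_*(T)^\tau_{\mathbb R}$ is the simplex with vertices $\check\omega_i/a_i$, $i\in\hat I_\tau$; $F_Y$ is its facet spanned by $\{\check\omega_i/a_i:i\in Y\}$; $a_Y=r\cdot\gcd\{a_i:i\in Y\}$. *)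

theory Defs
  imports "HOL-Analysis.Analysis"
begin

text \<open>Vertices of the affine diagram: \<open>Some i\<close> for \<open>i \<in> I_tau\<close> (the type 'i),
  and \<open>None\<close> for the extra vertex o.  Points of \<open>X_*(T)^tau_R\<close> are written in the
  basis of fundamental coweights \<open>omega_i\<close>, i.e. as vectors in real^'i.\<close>

definition fund_coweight :: "'i option \<Rightarrow> real ^ ('i::finite)" where
  "fund_coweight j = (case j of None \<Rightarrow> 0 | Some i \<Rightarrow> axis i 1)"

definition alcove_vertex :: "('i option \<Rightarrow> nat) \<Rightarrow> 'i option \<Rightarrow> real ^ ('i::finite)" where
  "alcove_vertex a j = (1 / real (a j)) *\<^sub>R fund_coweight j"

definition facet :: "('i option \<Rightarrow> nat) \<Rightarrow> 'i option set \<Rightarrow> (real ^ ('i::finite)) set" where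
  "facet a Y = convex hull (alcove_vertex a ` Y)"

definition a_Y :: "nat \<Rightarrow> ('i option \<Rightarrow> nat) \<Rightarrow> 'i option set \<Rightarrow> nat" where
  "a_Y r a Y = r * Gcd (a ` Y)"

text \<open>Membership in the lattice \<open>X_*(T_ad)^tau = \<Oplus>_i Z omega_i\<close>.\<close>
definition in_coweight_lattice :: "real ^ ('i::finite) \<Rightarrow> bool" where
  "in_coweight_lattice x \<longleftrightarrow> (\<forall>i. x $ i \<in> \<int>)"

definition rational_point :: "real ^ ('i::finite) \<Rightarrow> bool" where
  "rational_point x \<longleftrightarrow> (\<forall>i. x $ i \<in> \<rat>)"

end

theory Submission
  imports Defs
begin

text \<open>Put \<open>\<theta> = (\<Sum>j\<in>Y. x\<^sub>j \<omega>\<^sub>j) / M\<close> with \<open>M = \<Sum>j\<in>Y. a\<^sub>j x\<^sub>j\<close> for positive integers \<open>x\<^sub>j\<close>.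
  Rewritten as \<open>\<Sum>j\<in>Y. (a\<^sub>j x\<^sub>j / M) (\<omega>\<^sub>j / a\<^sub>j)\<close>, it is a convex combination of the vertices
  of \<open>F\<^sub>Y\<close> with positive weights, hence a rational interior point, and \<open>rM/r \<cdot> \<theta>\<close> is a lattice
  point.  The admissible multiples \<open>m\<close> are closed under subtraction, so the least one divides
  \<open>rM\<close>.  Finally \<open>p \<nmid> a\<^sub>Y\<close> gives \<open>p \<nmid> r\<close> and some \<open>p \<nmid> a\<^sub>j\<^sub>0\<close>; taking all \<open>x\<^sub>j = 1\<close>, or
  raising \<open>x\<^sub>j\<^sub>0\<close> to 2 if \<open>p\<close> divides \<open>\<Sum>a\<^sub>j\<close>, makes \<open>p \<nmid> rM\<close>.\<close>

lemma mod_closed_of_diff_closed: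
  fixes P :: "nat \<Rightarrow> bool"
  assumes diff_closed: "\<And>k l. P k \<Longrightarrow> P l \<Longrightarrow> k \<le> l \<Longrightarrow> P (l - k)"
    and "P m" "P n"
  shows "P (n mod m)"
  using \<open>P n\<close>
proof (induction n rule: less_induct)
  case (less n)
  show ?case
  proof (cases "m \<le> n \<and> 0 < m")
    case True
    then have "P (n - m)"
      using diff_closed[OF \<open>P m\<close> less.prems] by simp
    then have "P ((n - m) mod m)"
      using True by (intro less.IH) auto
    with True show ?thesis
      by (simp add: mod_if)
  next
    case False
    then show ?thesis
      using less.prems by (auto simp: not_le)
  qed
qed

lemma Least_pos_dvd_of_diff_closed:
  fixes P :: "nat \<Rightarrow> bool"
  assumes diff_closed: "\<And>k l. P k \<Longrightarrow> P l \<Longrightarrow> k \<le> l \<Longrightarrow> P (l - k)"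
    and "P n" "0 < n"
  shows "(LEAST m. 0 < m \<and> P m) dvd n"
proof -
  define m where "m = (LEAST m. 0 < m \<and> P m)"
  have m: "0 < m" "P m"
    using LeastI[of "\<lambda>m. 0 < m \<and> P m" n] assms(2,3) unfolding m_def by auto
  have "n mod m = 0"
  proof (rule ccontr)
    assume "n mod m \<noteq> 0"
    moreover have "P (n mod m)"
      using mod_closed_of_diff_closed[OF diff_closed m(2) \<open>P n\<close>] .
    ultimately have "m \<le> n mod m"
      unfolding m_def by (simp add: Least_le)
    with mod_less_divisor[OF \<open>0 < m\<close>, of n] show False
      by linarith
  qed
  then show ?thesis
    unfolding m_def by auto
qed

lemma sum_scaleR_in_rel_interior_convex_hull_image:
  fixes f :: "'a \<Rightarrow> 'b::euclidean_space" and w :: "'a \<Rightarrow> real"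
  assumes "finite I" "inj_on f I" "\<And>i. i \<in> I \<Longrightarrow> 0 < w i" "sum w I = 1"
  shows "(\<Sum>i\<in>I. w i *\<^sub>R f i) \<in> rel_interior (convex hull (f ` I))"
proof -
  let ?u = "w \<circ> the_inv_into I f"
  have "(\<forall>y\<in>f ` I. 0 < ?u y) \<and> sum ?u (f ` I) = 1 \<and>
      (\<Sum>y\<in>f ` I. ?u y *\<^sub>R y) = (\<Sum>i\<in>I. w i *\<^sub>R f i)"
    using the_inv_into_f_f[OF assms(2)] assms(3,4) by (simp add: sum.reindex[OF assms(2)])
  then show ?thesis
    using explicit_subset_rel_interior_convex_hull_minimal[of "f ` I"] assms(1) by blast
qed

lemma in_coweight_lattice_diff:
  "in_coweight_lattice x \<Longrightarrow> in_coweight_lattice y \<Longrightarrow> in_coweight_lattice (x - y)"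
  by (simp add: in_coweight_lattice_def)

lemma in_coweight_lattice_sum_of_nat_scaleR_fund_coweight:
  "in_coweight_lattice (\<Sum>j\<in>Y. real (x j) *\<^sub>R fund_coweight j)"
  by (auto simp: in_coweight_lattice_def fund_coweight_def axis_def split: option.split)

lemma rational_point_sum_of_rat_scaleR_fund_coweight:
  "(\<And>j. j \<in> Y \<Longrightarrow> c j \<in> \<rat>) \<Longrightarrow> rational_point (\<Sum>j\<in>Y. c j *\<^sub>R fund_coweight j)"
  by (auto simp: rational_point_def fund_coweight_def axis_def split: option.split)

lemma inj_alcove_vertex:
  assumes "\<And>j. 0 < a j"
  shows "inj (alcove_vertex a)"
proof (rule injI)
  have component: "alcove_vertex a j $ i = (if j = Some i then 1 / real (a j) else 0)" for j i
    by (cases j) (auto simp: alcove_vertex_def fund_coweight_def axis_def)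
  have nonzero: "1 / real (a j) \<noteq> 0" for j
    using assms[of j] by simp
  fix j k
  assume "alcove_vertex a j = alcove_vertex a k"
  then have same_component: "alcove_vertex a j $ i = alcove_vertex a k $ i" for i
    by simp
  have same_support: "(j = Some i) \<longleftrightarrow> (k = Some i)" for i
    using same_component[of i] nonzero[of j] nonzero[of k] unfolding component
    by (cases "j = Some i"; cases "k = Some i") simp_all
  show "j = k"
    using same_support[of "the j"] same_support[of "the k"] by (cases j; cases k) simp_all
qed

definition admissible_multiple :: "nat \<Rightarrow> real ^ ('i::finite) \<Rightarrow> nat \<Rightarrow> bool" where
  "admissible_multiple r \<theta> m \<longleftrightarrow> r dvd m \<and> in_coweight_lattice ((real m / real r) *\<^sub>R \<theta>)"

lemma admissible_multiple_diff:
  assumes "admissible_multiple r \<theta> k" "admissible_multiple r \<theta> l" "k \<le> l"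
  shows "admissible_multiple r \<theta> (l - k)"
proof -
  have "(real (l - k) / real r) *\<^sub>R \<theta> = (real l / real r) *\<^sub>R \<theta> - (real k / real r) *\<^sub>R \<theta>"
    using \<open>k \<le> l\<close> by (simp add: diff_divide_distrib scaleR_diff_left)
  then show ?thesis
    using assms by (simp add: admissible_multiple_def in_coweight_lattice_diff)
qed

lemma obtain_least_admissible_multiple_dvd:
  assumes "admissible_multiple r \<theta> n" "0 < n"
  obtains m where "0 < m" "admissible_multiple r \<theta> m"
    "\<And>m'. 0 < m' \<Longrightarrow> admissible_multiple r \<theta> m' \<Longrightarrow> m \<le> m'" "m dvd n"
proof
  let ?m = "LEAST m. 0 < m \<and> admissible_multiple r \<theta> m"
  show "0 < ?m" "admissible_multiple r \<theta> ?m"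
    using LeastI[of "\<lambda>m. 0 < m \<and> admissible_multiple r \<theta> m" n] assms by auto
  show "?m \<le> m'" if "0 < m'" "admissible_multiple r \<theta> m'" for m'
    using that by (auto intro: Least_le)
  show "?m dvd n"
    by (rule Least_pos_dvd_of_diff_closed[OF admissible_multiple_diff assms])
qed

definition weighted_point :: "('i option \<Rightarrow> nat) \<Rightarrow> 'i option set \<Rightarrow> ('i option \<Rightarrow> nat)
    \<Rightarrow> real ^ ('i::finite)" where
  "weighted_point a Y x = (\<Sum>j\<in>Y. (real (x j) / real (\<Sum>k\<in>Y. a k * x k)) *\<^sub>R fund_coweight j)"

lemma rational_point_weighted_point: "rational_point (weighted_point a Y x)"
  unfolding weighted_point_def
  by (rule rational_point_sum_of_rat_scaleR_fund_coweight) (intro Rats_divide Rats_of_nat)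

context
  fixes a :: "('i::finite) option \<Rightarrow> nat" and Y :: "'i option set" and x :: "'i option \<Rightarrow> nat"
  assumes a_pos: "\<And>j. 0 < a j" and x_pos: "\<And>j. j \<in> Y \<Longrightarrow> 0 < x j" and "Y \<noteq> {}"
begin

lemma weighted_sum_pos: "0 < (\<Sum>k\<in>Y. a k * x k)"
proof -
  obtain j where "j \<in> Y"
    using \<open>Y \<noteq> {}\<close> by blast
  then show ?thesis
    using a_pos x_pos by (intro sum_pos2[of Y j]) auto
qed

lemma weighted_point_in_rel_interior_facet:
  "weighted_point a Y x \<in> rel_interior (facet a Y)"
proof -
  define M where "M = real (\<Sum>k\<in>Y. a k * x k)"
  have "0 < M"
    unfolding M_def using weighted_sum_pos by (simp only: of_nat_0_less_iff)
  let ?w = "\<lambda>j. real (a j * x j) / M"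
  have "weighted_point a Y x = (\<Sum>j\<in>Y. ?w j *\<^sub>R alcove_vertex a j)"
    unfolding weighted_point_def alcove_vertex_def M_def using a_pos
    by (intro sum.cong refl) (simp add: field_simps)
  also have "\<dots> \<in> rel_interior (facet a Y)"
    unfolding facet_def
  proof (rule sum_scaleR_in_rel_interior_convex_hull_image)
    show "inj_on (alcove_vertex a) Y"
      using inj_alcove_vertex[OF a_pos] by (rule inj_on_subset) simp
    show "0 < ?w j" if "j \<in> Y" for j
      using a_pos x_pos[OF that] \<open>0 < M\<close> by simp
    show "sum ?w Y = 1"
      using \<open>0 < M\<close> unfolding sum_divide_distrib[symmetric] M_def of_nat_sum by simp
  qed simp
  finally show ?thesis .
qed

lemma admissible_multiple_weighted_point:
  assumes "0 < r"
  shows "admissible_multiple r (weighted_point a Y x) (r * (\<Sum>k\<in>Y. a k * x k))"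
proof -
  define M where "M = (\<Sum>k\<in>Y. a k * x k)"
  have "0 < M"
    unfolding M_def by (rule weighted_sum_pos)
  have "real (r * M) / real r * (real (x j) / real M) = real (x j)" for j
    using assms \<open>0 < M\<close> by simp
  then have "(real (r * M) / real r) *\<^sub>R weighted_point a Y x =
      (\<Sum>j\<in>Y. real (x j) *\<^sub>R fund_coweight j)"
    unfolding weighted_point_def scaleR_sum_right scaleR_scaleR M_def by presburger
  then show ?thesis
    unfolding M_def
    by (simp add: admissible_multiple_def in_coweight_lattice_sum_of_nat_scaleR_fund_coweight)
qed

end

lemma exists_pos_weights_sum_not_dvd:
  fixes a :: "'a \<Rightarrow> nat"
  assumes "finite Y" "j0 \<in> Y" "\<not> p dvd a j0"
  shows "\<exists>x. (\<forall>j\<in>Y. 0 < x j) \<and> \<not> p dvd (\<Sum>j\<in>Y. a j * x j)"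
proof (cases "p dvd (\<Sum>j\<in>Y. a j)")
  case False
  then show ?thesis
    by (intro exI[of _ "\<lambda>_. 1"]) simp
next
  case True
  let ?x = "\<lambda>j. if j = j0 then 2 else 1"
  have "(\<Sum>j\<in>Y. a j * ?x j) = (\<Sum>j\<in>Y. a j + (if j = j0 then a j else 0))"
    by (intro sum.cong refl) simp
  also have "\<dots> = (\<Sum>j\<in>Y. a j) + a j0"
    using assms(1,2) by (simp add: sum.distrib)
  finally show ?thesis
    using True assms(3) by (intro exI[of _ ?x]) (simp add: dvd_add_right_iff)
qed

theorem lemma2p6:
  fixes p r :: nat
    and a :: "('i::finite) option \<Rightarrow> nat"
    and Y :: "'i option set"
  assumes "prime p"
    and "r \<in> {1, 2, 3}"
    and "\<forall>j. a j > 0"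
    and "a None = 1"
    and "Y \<noteq> {}"
    and "\<not> p dvd a_Y r a Y"
  shows "\<exists>\<theta>. rational_point \<theta> \<and> \<theta> \<in> rel_interior (facet a Y) \<and>
           (\<exists>m::nat. m > 0 \<and> r dvd m \<and>
                in_coweight_lattice ((real m / real r) *\<^sub>R \<theta>) \<and>
                (\<forall>m'::nat. m' > 0 \<and> r dvd m' \<and>
                    in_coweight_lattice ((real m' / real r) *\<^sub>R \<theta>) \<longrightarrow> m \<le> m') \<and>
                \<not> p dvd m)"
proof -
  have "0 < r" using assms(2) by auto
  have "\<not> p dvd r" and "\<not> p dvd Gcd (a ` Y)"
    using assms(6) unfolding a_Y_def by auto
  then obtain j0 where "j0 \<in> Y" "\<not> p dvd a j0"
    using Gcd_greatest[of "a ` Y" p] by blast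
  then obtain x where x_pos: "\<And>j. j \<in> Y \<Longrightarrow> 0 < x j" and "\<not> p dvd (\<Sum>j\<in>Y. a j * x j)"
    using exists_pos_weights_sum_not_dvd[of Y j0 p a] by auto
  have a_pos: "\<And>j. 0 < a j"
    using assms(3) by blast
  define \<theta> where "\<theta> = weighted_point a Y x"
  let ?rM = "r * (\<Sum>j\<in>Y. a j * x j)"
  have "admissible_multiple r \<theta> ?rM" "0 < ?rM"
    unfolding \<theta>_def using admissible_multiple_weighted_point[OF a_pos x_pos \<open>Y \<noteq> {}\<close> \<open>0 < r\<close>]
      weighted_sum_pos[OF a_pos x_pos \<open>Y \<noteq> {}\<close>] \<open>0 < r\<close> by simp_all
  then obtain m where m: "0 < m" "admissible_multiple r \<theta> m"
      "\<And>m'. 0 < m' \<Longrightarrow> admissible_multiple r \<theta> m' \<Longrightarrow> m \<le> m'" and "m dvd ?rM"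
    by (rule obtain_least_admissible_multiple_dvd) blast
  moreover have "\<not> p dvd ?rM"
    using \<open>prime p\<close> \<open>\<not> p dvd r\<close> \<open>\<not> p dvd (\<Sum>j\<in>Y. a j * x j)\<close> by (simp add: prime_dvd_mult_iff)
  ultimately have "\<not> p dvd m"
    using dvd_trans by blast
  moreover have "rational_point \<theta>" "\<theta> \<in> rel_interior (facet a Y)"
    unfolding \<theta>_def using rational_point_weighted_point
      weighted_point_in_rel_interior_facet[OF a_pos x_pos \<open>Y \<noteq> {}\<close>] .
  ultimately show ?thesis
    using m unfolding admissible_multiple_def by (intro exI[of _ \<theta>] exI[of _ m]) auto
qed

end
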